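(* Let $\Gamma=(V,E)$ be a Veldkamp $n$-gon ($n\ge 2$) and suppose that the local opposition relation $\equiv_v$ is trivial for some $v\in V$. Then $\equiv_w$ is trivial for every $w\in V$ with ${\rm dist}(v,w)$ even. If moreover $n$ is odd, then $\equiv_w$ is trivial for all $w\in V$.
   Context: A graph is a pair $(V,E)$ with $E$ a set of $2$-element subsets of $V$; $\Gamma_v$ is the set of neighbors of $v$. An $s$-path is a sequence $(x_0,\dots,x_s)$ of vertices with consecutive vertices adjacent and $x_{i-2}\ne x_i$ for $i\in[2,s]$; ${\rm dist}$ is graph distance. A closed $s$-path is an $s$-path with $s\ge3$ whose first and last vertices coincide; an $s$-circuit is the subgraph determined by a closed $s$-path. An opposition relation on a set $X$ is a symmetric anti-reflexive relation; it is trivial if any two distinct elements are related; it is $k$-plump if for every $S\subseteq X$ with $|S|\le k$ some element of $X$ is related to all elements of $S$. A Veldkamp graph is a graph with a $2$-plump opposition relation $\equiv_v$ on $\Gamma_v$ for each vertex $v$. A path $(v_0,\dots,v_s)$ is straight if $v_{i-1}\equiv_{v_i}v_{i+1}$ for all $i\in[1,s-1]$; a circuit is straight if every path in it is straight. A Veldkamp $n$-gon ($n\ge2$) is a Veldkamp graph satisfying (VP1) connected and bipartite; (VP2) for each $k\in[1,n-1]$ each straight $k$-path is the unique straight path between its endpoints of length at most $k$; (VP3) every straight $(n+1)$-path lies in a straight $2n$-circuit. *)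

theory Defs
  imports Main
begin

definition graph :: "'a set \<Rightarrow> 'a set set \<Rightarrow> bool" where
  "graph V E \<longleftrightarrow> (\<forall>e\<in>E. \<exists>x y. x \<in> V \<and> y \<in> V \<and> x \<noteq> y \<and> e = {x, y})"

definition nbrs :: "'a set set \<Rightarrow> 'a \<Rightarrow> 'a set" where
  "nbrs E v = {u. {u, v} \<in> E}"

definition is_walk :: "'a set \<Rightarrow> 'a set set \<Rightarrow> 'a list \<Rightarrow> nat \<Rightarrow> bool" where
  "is_walk V E xs s \<longleftrightarrow> length xs = Suc s \<and> set xs \<subseteq> V \<and>
     (\<forall>i<s. {xs ! i, xs ! Suc i} \<in> E)"

definition is_path :: "'a set \<Rightarrow> 'a set set \<Rightarrow> 'a list \<Rightarrow> nat \<Rightarrow> bool" where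
  "is_path V E xs s \<longleftrightarrow> is_walk V E xs s \<and>
     (\<forall>i. 2 \<le> i \<and> i \<le> s \<longrightarrow> xs ! (i - 2) \<noteq> xs ! i)"

definition gdist :: "'a set \<Rightarrow> 'a set set \<Rightarrow> 'a \<Rightarrow> 'a \<Rightarrow> nat" where
  "gdist V E v w = (LEAST k. \<exists>xs. is_walk V E xs k \<and> hd xs = v \<and> last xs = w)"

definition connected_graph :: "'a set \<Rightarrow> 'a set set \<Rightarrow> bool" where
  "connected_graph V E \<longleftrightarrow>
     (\<forall>v\<in>V. \<forall>w\<in>V. \<exists>xs k. is_walk V E xs k \<and> hd xs = v \<and> last xs = w)"

definition bipartite_graph :: "'a set \<Rightarrow> 'a set set \<Rightarrow> bool" where
  "bipartite_graph V E \<longleftrightarrow> (\<exists>c :: 'a \<Rightarrow> bool. \<forall>x\<in>V. \<forall>y\<in>V. {x, y} \<in> E \<longrightarrow> c x \<noteq> c y)"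

definition opposition_rel :: "'a set \<Rightarrow> ('a \<Rightarrow> 'a \<Rightarrow> bool) \<Rightarrow> bool" where
  "opposition_rel X R \<longleftrightarrow> (\<forall>x y. R x y \<longrightarrow> x \<in> X \<and> y \<in> X) \<and>
     (\<forall>x y. R x y \<longrightarrow> R y x) \<and> (\<forall>x. \<not> R x x)"

definition trivial_opp :: "'a set \<Rightarrow> ('a \<Rightarrow> 'a \<Rightarrow> bool) \<Rightarrow> bool" where
  "trivial_opp X R \<longleftrightarrow> (\<forall>x\<in>X. \<forall>y\<in>X. x \<noteq> y \<longrightarrow> R x y)"

definition plump :: "nat \<Rightarrow> 'a set \<Rightarrow> ('a \<Rightarrow> 'a \<Rightarrow> bool) \<Rightarrow> bool" where
  "plump k X R \<longleftrightarrow> (\<forall>S. S \<subseteq> X \<and> finite S \<and> card S \<le> k \<longrightarrow> (\<exists>x\<in>X. \<forall>s\<in>S. R x s))"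

text \<open>opp v x y means x \<equiv>_v y.\<close>
definition veldkamp_graph :: "'a set \<Rightarrow> 'a set set \<Rightarrow> ('a \<Rightarrow> 'a \<Rightarrow> 'a \<Rightarrow> bool) \<Rightarrow> bool" where
  "veldkamp_graph V E opp \<longleftrightarrow> graph V E \<and>
     (\<forall>v\<in>V. opposition_rel (nbrs E v) (opp v) \<and> plump 2 (nbrs E v) (opp v))"

definition straight :: "('a \<Rightarrow> 'a \<Rightarrow> 'a \<Rightarrow> bool) \<Rightarrow> 'a list \<Rightarrow> bool" where
  "straight opp xs \<longleftrightarrow> (\<forall>i. 1 \<le> i \<and> i + 1 < length xs \<longrightarrow> opp (xs ! i) (xs ! (i - 1)) (xs ! (i + 1)))"

definition closed_path :: "'a set \<Rightarrow> 'a set set \<Rightarrow> 'a list \<Rightarrow> nat \<Rightarrow> bool" where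
  "closed_path V E xs s \<longleftrightarrow> is_path V E xs s \<and> 3 \<le> s \<and> hd xs = last xs"

definition path_edges :: "'a list \<Rightarrow> 'a set set" where
  "path_edges xs = {{xs ! i, xs ! Suc i} | i. Suc i < length xs}"

definition straight_circuit :: "('a \<Rightarrow> 'a \<Rightarrow> 'a \<Rightarrow> bool) \<Rightarrow> 'a list \<Rightarrow> bool" where
  "straight_circuit opp c \<longleftrightarrow>
     (\<forall>xs s. is_path (set c) (path_edges c) xs s \<longrightarrow> straight opp xs)"

definition veldkamp_ngon :: "'a set \<Rightarrow> 'a set set \<Rightarrow> ('a \<Rightarrow> 'a \<Rightarrow> 'a \<Rightarrow> bool) \<Rightarrow> nat \<Rightarrow> bool" where
  "veldkamp_ngon V E opp n \<longleftrightarrow> 2 \<le> n \<and> veldkamp_graph V E opp \<and>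
     connected_graph V E \<and> bipartite_graph V E \<and>
     (\<forall>k. 1 \<le> k \<and> k \<le> n - 1 \<longrightarrow>
        (\<forall>p. is_path V E p k \<and> straight opp p \<longrightarrow>
           (\<forall>q j. is_path V E q j \<and> straight opp q \<and> j \<le> k \<and>
                  hd q = hd p \<and> last q = last p \<longrightarrow> q = p))) \<and>
     (\<forall>p. is_path V E p (n + 1) \<and> straight opp p \<longrightarrow>
        (\<exists>c. closed_path V E c (2 * n) \<and> straight_circuit opp c \<and>
             set p \<subseteq> set c \<and> path_edges p \<subseteq> path_edges c))"

end

theory Submission
  imports Defs
begin

text \<open>
  By (VP3) every straight (n+1)-path lies in an apartment (a straight 2n-circuit), and by (VP2) a
  straight path of length below n is determined by its endpoints. Passing through apartments twice
  shows that every neighbour of the end b of a straight n-path from a is the penultimate vertex of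
  some straight n-path from a to b. Now let the opposition at a be trivial and let x, y be
  distinct neighbours of b. Take straight n-paths from a to b through x and through y. Their
  second vertices differ (otherwise (VP2) makes the paths equal), so they are opposite at a; then
  both paths lie in one apartment, in which x and y are the two neighbours of b, so x and y are
  opposite at b. Thus triviality travels along straight n-paths. For a path a, m, c choose e
  opposite both a and c at m: a straight n-path a, m, e, ... carries triviality to its end, and
  the same path started at c instead of a carries it back to c. For odd n the end of a straight
  n-path a, m, ... is at even distance from m along the path, so triviality also crosses single
  edges.
\<close>

lemma mem_nbrs_iff: "x \<in> nbrs E v \<longleftrightarrow> {x, v} \<in> E"
  by (simp add: nbrs_def)

lemma mod_neq_add_twice_unit:
  fixes N z d :: int
  assumes "4 \<le> N" and "d = 1 \<or> d = -1"
  shows "z mod N \<noteq> (z + 2 * d) mod N"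
proof
  assume "z mod N = (z + 2 * d) mod N"
  then have "N dvd 2 * d" by (metis mod_eq_dvd_iff add_diff_cancel_left')
  then have "N dvd 2" using assms(2) by auto
  then show False using assms(1) zdvd_imp_le by fastforce
qed

lemma path_edges_subset_set: "e \<in> path_edges xs \<Longrightarrow> e \<subseteq> set xs"
  unfolding path_edges_def by auto

lemma is_walk_hd_last:
  assumes "is_walk V E xs L"
  shows "hd xs = xs ! 0" and "last xs = xs ! L"
proof -
  have "xs \<noteq> []" and "length xs = Suc L" using assms unfolding is_walk_def by auto
  then show "hd xs = xs ! 0" and "last xs = xs ! L" by (simp_all add: hd_conv_nth last_conv_nth)
qed

lemma gdist_walk:
  assumes "connected_graph V E" and "v \<in> V" and "w \<in> V"
  shows "\<exists>xs. is_walk V E xs (gdist V E v w) \<and> hd xs = v \<and> last xs = w"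
proof -
  have "\<exists>k xs. is_walk V E xs k \<and> hd xs = v \<and> last xs = w"
    using assms unfolding connected_graph_def by blast
  then show ?thesis unfolding gdist_def by (rule LeastI_ex)
qed

locale veldkamp_polygon =
  fixes V :: "'a set" and E :: "'a set set" and opp :: "'a \<Rightarrow> 'a \<Rightarrow> 'a \<Rightarrow> bool" and n :: nat
  assumes ngon: "veldkamp_ngon V E opp n"
begin

lemma two_le_n: "2 \<le> n"
  using ngon unfolding veldkamp_ngon_def by auto

lemma edgeD:
  assumes "{x, y} \<in> E"
  shows "x \<in> V" and "y \<in> V" and "x \<noteq> y"
proof -
  have "graph V E" using ngon unfolding veldkamp_ngon_def veldkamp_graph_def by auto
  then obtain a b where "a \<in> V" "b \<in> V" "a \<noteq> b" "{x, y} = {a, b}"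
    using assms unfolding graph_def by blast
  then show "x \<in> V" "y \<in> V" "x \<noteq> y" by (auto simp: doubleton_eq_iff)
qed

lemma opposition_rel_at: "v \<in> V \<Longrightarrow> opposition_rel (nbrs E v) (opp v)"
  using ngon unfolding veldkamp_ngon_def veldkamp_graph_def by auto

lemma opp_sym: "v \<in> V \<Longrightarrow> opp v x y \<Longrightarrow> opp v y x"
  using opposition_rel_at unfolding opposition_rel_def by blast

lemma opp_irrefl: "v \<in> V \<Longrightarrow> \<not> opp v x x"
  using opposition_rel_at unfolding opposition_rel_def by blast

lemma exists_common_opp:
  assumes "v \<in> V" and "x \<in> nbrs E v" and "y \<in> nbrs E v"
  shows "\<exists>z\<in>nbrs E v. opp v z x \<and> opp v z y"
proof -
  have "plump 2 (nbrs E v) (opp v)"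
    using ngon assms(1) unfolding veldkamp_ngon_def veldkamp_graph_def by auto
  moreover have "card {x, y} \<le> 2" by (simp add: card_insert_le_m1)
  ultimately show ?thesis
    using assms(2,3) unfolding plump_def
    by (metis empty_subsetI finite.emptyI finite.insertI insert_iff insert_subset)
qed

lemma straight_path_unique:
  assumes "1 \<le> k" and "k \<le> n - 1" and "is_path V E p k" and "straight opp p"
    and "is_path V E q j" and "straight opp q" and "j \<le> k" and "hd q = hd p" and "last q = last p"
  shows "q = p"
proof -
  have "\<forall>k. 1 \<le> k \<and> k \<le> n - 1 \<longrightarrow>
        (\<forall>p. is_path V E p k \<and> straight opp p \<longrightarrow>
           (\<forall>q j. is_path V E q j \<and> straight opp q \<and> j \<le> k \<and>
                  hd q = hd p \<and> last q = last p \<longrightarrow> q = p))"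
    using ngon unfolding veldkamp_ngon_def by (elim conjE)
  then show ?thesis using assms by blast
qed

lemma straight_path_in_circuit:
  assumes "is_path V E p (n + 1)" and "straight opp p"
  shows "\<exists>c. closed_path V E c (2 * n) \<and> straight_circuit opp c \<and>
           set p \<subseteq> set c \<and> path_edges p \<subseteq> path_edges c"
proof -
  have "\<forall>p. is_path V E p (n + 1) \<and> straight opp p \<longrightarrow>
        (\<exists>c. closed_path V E c (2 * n) \<and> straight_circuit opp c \<and>
             set p \<subseteq> set c \<and> path_edges p \<subseteq> path_edges c)"
    using ngon unfolding veldkamp_ngon_def by (elim conjE)
  then show ?thesis using assms by blast
qed

section \<open>Straight paths\<close>

text \<open>Straight paths of length m are represented as sequences indexed by 0..m.\<close>

definition straight_walk :: "(nat \<Rightarrow> 'a) \<Rightarrow> nat \<Rightarrow> bool" where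
  "straight_walk g m \<longleftrightarrow> (\<forall>k\<le>m. g k \<in> V) \<and> (\<forall>k<m. {g k, g (Suc k)} \<in> E) \<and>
     (\<forall>k. k + 2 \<le> m \<longrightarrow> opp (g (Suc k)) (g k) (g (Suc (Suc k))))"

lemma straight_walkD:
  assumes "straight_walk g m"
  shows "k \<le> m \<Longrightarrow> g k \<in> V" and "k < m \<Longrightarrow> {g k, g (Suc k)} \<in> E"
    and "k + 2 \<le> m \<Longrightarrow> opp (g (Suc k)) (g k) (g (Suc (Suc k)))"
  using assms unfolding straight_walk_def by auto

lemma straight_walk_no_backtrack: "straight_walk g m \<Longrightarrow> k + 2 \<le> m \<Longrightarrow> g k \<noteq> g (Suc (Suc k))"
  by (metis straight_walkD(1,3) opp_irrefl Suc_leD add_2_eq_Suc')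

lemma straight_walk_is_path:
  assumes "straight_walk g m"
  shows "is_path V E (map g [0..<Suc m]) m" and "straight opp (map g [0..<Suc m])"
proof -
  have "is_walk V E (map g [0..<Suc m]) m"
    using straight_walkD(1,2)[OF assms] unfolding is_walk_def by (auto simp del: upt_Suc)
  moreover have "g (i - 2) \<noteq> g i" if "2 \<le> i" and "i \<le> m" for i
  proof -
    obtain k where "i = Suc (Suc k)" using \<open>2 \<le> i\<close> by (metis add_2_eq_Suc le_Suc_ex)
    then show ?thesis using straight_walk_no_backtrack[OF assms] that by simp
  qed
  ultimately show "is_path V E (map g [0..<Suc m]) m"
    unfolding is_path_def by (auto simp del: upt_Suc)
  show "straight opp (map g [0..<Suc m])"
    unfolding straight_def
  proof (intro allI impI)
    fix i assume i: "1 \<le> i \<and> i + 1 < length (map g [0..<Suc m])"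
    then obtain k where "i = Suc k" by (metis Suc_le_D One_nat_def)
    then show
      "opp (map g [0..<Suc m] ! i) (map g [0..<Suc m] ! (i - 1)) (map g [0..<Suc m] ! (i + 1))"
      using straight_walkD(3)[OF assms, of k] i by (simp del: upt_Suc)
  qed
qed

lemma straight_walk_of_path:
  assumes "is_walk V E xs m" and "straight opp xs"
  shows "straight_walk (\<lambda>k. xs ! k) m"
proof -
  have "opp (xs ! Suc k) (xs ! k) (xs ! Suc (Suc k))" if "k + 2 \<le> m" for k
  proof -
    have "1 \<le> Suc k \<and> Suc k + 1 < length xs" using that assms(1) by (simp add: is_walk_def)
    then show ?thesis using assms(2) unfolding straight_def by (auto dest!: spec[where x="Suc k"])
  qed
  with assms(1) show ?thesis unfolding straight_walk_def is_walk_def by auto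
qed

lemma straight_walk_shift:
  "straight_walk g m \<Longrightarrow> i + k \<le> m \<Longrightarrow> straight_walk (\<lambda>j. g (i + j)) k"
  unfolding straight_walk_def by auto

lemma straight_walk_rev:
  assumes "straight_walk g m"
  shows "straight_walk (\<lambda>k. g (m - k)) m"
  unfolding straight_walk_def
proof (intro conjI allI impI)
  fix k assume "k \<le> m"
  then show "g (m - k) \<in> V" using straight_walkD(1)[OF assms] by simp
next
  fix k assume k: "k < m"
  then have "{g (m - Suc k), g (Suc (m - Suc k))} \<in> E" using straight_walkD(2)[OF assms] by simp
  moreover have "Suc (m - Suc k) = m - k" using k by simp
  ultimately show "{g (m - k), g (m - Suc k)} \<in> E" by (simp add: insert_commute)
next
  fix k assume k: "k + 2 \<le> m"
  define j where "j = m - Suc (Suc k)"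
  have "m - Suc k = Suc j" "m - k = Suc (Suc j)" using k unfolding j_def by auto
  moreover have "opp (g (Suc j)) (g j) (g (Suc (Suc j)))" "g (Suc j) \<in> V"
    using k straight_walkD(1,3)[OF assms] unfolding j_def by auto
  ultimately show "opp (g (m - Suc k)) (g (m - k)) (g (m - Suc (Suc k)))"
    using opp_sym j_def by auto
qed

lemma straight_walk_snoc:
  assumes g: "straight_walk g m" and e: "{g m, x} \<in> E" and o: "1 \<le> m \<Longrightarrow> opp (g m) (g (m - 1)) x"
  shows "straight_walk (\<lambda>k. if k \<le> m then g k else x) (Suc m)"
  unfolding straight_walk_def
proof (intro conjI allI impI)
  fix k assume "k \<le> Suc m"
  then show "(if k \<le> m then g k else x) \<in> V" using straight_walkD(1)[OF g] edgeD(2)[OF e] by auto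
next
  fix k assume "k < Suc m"
  then show "{if k \<le> m then g k else x, if Suc k \<le> m then g (Suc k) else x} \<in> E"
    using straight_walkD(2)[OF g] e by (cases "k = m") auto
next
  fix k assume k: "k + 2 \<le> Suc m"
  show "opp (if Suc k \<le> m then g (Suc k) else x) (if k \<le> m then g k else x)
      (if Suc (Suc k) \<le> m then g (Suc (Suc k)) else x)"
  proof (cases "k + 2 \<le> m")
    case True
    then show ?thesis using straight_walkD(3)[OF g] by simp
  next
    case False
    then have "m = Suc k" using k by simp
    then show ?thesis using o by simp
  qed
qed

lemma straight_walk_update_start:
  assumes "straight_walk g m" and "{x, g 1} \<in> E" and "opp (g 1) x (g 2)"
  shows "straight_walk (g(0 := x)) m"
  using assms edgeD(1)[OF assms(2)] unfolding straight_walk_def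
  by (auto simp: numeral_2_eq_2 split: nat.splits)

lemma straight_walk_unique:
  assumes "1 \<le> k" and "k \<le> n - 1" and g: "straight_walk g k" and q: "straight_walk q j"
    and "j \<le> k" and "q 0 = g 0" and "q j = g k"
  shows "j = k" and "i \<le> k \<Longrightarrow> q i = g i"
proof -
  have "map q [0..<Suc j] = map g [0..<Suc k]"
    using straight_path_unique[OF assms(1,2) straight_walk_is_path[OF g]
        straight_walk_is_path[OF q]] assms(5-7) by (simp add: hd_map last_map del: upt_Suc)
  then show "j = k" and "i \<le> k \<Longrightarrow> q i = g i"
    by (metis length_map length_upt diff_zero Suc_inject, metis nth_map_upt length_map length_upt
        diff_zero le_imp_less_Suc add_0)
qed

text \<open>
  By (VP2) the two halves of such a loop coincide, so the loop backtracks at its midpoint.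
\<close>

lemma no_short_straight_loop:
  assumes r: "straight_walk r m" and "1 \<le> m" and "m \<le> 2 * n - 2"
  shows "r 0 \<noteq> r m"
proof
  assume loop: "r 0 = r m"
  show False
  proof (cases "m = 1")
    case True
    then have "{r 0, r m} \<in> E" using straight_walkD(2)[OF r, of 0] by simp
    then show False using edgeD(3) loop by metis
  next
    case False
    define a where "a = m div 2"
    define b where "b = m - a"
    have ab: "1 \<le> b" "a \<le> b" "b \<le> n - 1" "a + b = m"
      using False assms(2,3) unfolding a_def b_def by auto
    have sb: "straight_walk r b" using straight_walk_shift[OF r, of 0 b] ab by simp
    have sa: "straight_walk (\<lambda>k. r (m - k)) a"
      using straight_walk_shift[OF straight_walk_rev[OF r], of 0 a] ab by simp
    have "m - a = b" using ab by simp
    then have "r (m - 0) = r 0" "r (m - a) = r b" using loop by simp_all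
    then have "a = b" and mirror: "\<And>i. i \<le> b \<Longrightarrow> r (m - i) = r i"
      using straight_walk_unique[OF ab(1,3) sb sa ab(2)] by simp_all
    moreover have "m - (b - 1) = Suc (Suc (b - 1))" using ab \<open>a = b\<close> by simp
    ultimately have "r (b - 1) = r (Suc (Suc (b - 1)))" using mirror[of "b - 1"] by simp
    moreover have "b - 1 + 2 \<le> m" using ab \<open>a = b\<close> by simp
    ultimately show False using straight_walk_no_backtrack[OF r] by metis
  qed
qed

section \<open>Apartments\<close>

text \<open>An apartment is a straight 2n-circuit, traversed as an infinite 2n-periodic sequence.\<close>

definition apartment :: "(nat \<Rightarrow> 'a) \<Rightarrow> bool" where
  "apartment h \<longleftrightarrow> (\<forall>m. straight_walk h m) \<and> (\<forall>k. h (k + 2 * n) = h k)"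

lemma apartment_straight_walk: "apartment h \<Longrightarrow> straight_walk (\<lambda>k. h (a + k)) m"
  unfolding apartment_def using straight_walk_shift by blast

lemma apartment_periodic: "apartment h \<Longrightarrow> h (k + 2 * n) = h k"
  unfolding apartment_def by blast

text \<open>
  Integer positions on a closed path of length 2n, taken modulo 2n, so that the circuit can be
  traversed in either direction.
\<close>

definition circuit_vertex :: "'a list \<Rightarrow> int \<Rightarrow> 'a" where
  "circuit_vertex c z = c ! nat (z mod int (2 * n))"

lemma four_le_period: "4 \<le> int (2 * n)"
  using two_le_n by simp

lemma mod_period_bounds: "0 \<le> z mod int (2 * n)" "z mod int (2 * n) < int (2 * n)"
  using four_le_period by simp_all

lemma nat_mod_period_less: "nat (z mod int (2 * n)) < 2 * n"
  using mod_period_bounds[of z] by (simp add: nat_less_iff)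

context
  fixes c :: "'a list"
  assumes circuit: "closed_path V E c (2 * n)" and circuit_straight: "straight_circuit opp c"
begin

lemma circuit_walk: "is_walk V E c (2 * n)"
  using circuit unfolding closed_path_def is_path_def by auto

lemma length_circuit: "length c = Suc (2 * n)"
  using circuit_walk unfolding is_walk_def by auto

lemma circuit_closes: "c ! (2 * n) = c ! 0"
proof -
  have "hd c = last c" using circuit unfolding closed_path_def by auto
  moreover have "c \<noteq> []" using length_circuit by auto
  ultimately show ?thesis using length_circuit by (simp add: hd_conv_nth last_conv_nth)
qed

lemma path_edges_circuit: "path_edges c \<subseteq> E"
  using circuit_walk length_circuit unfolding is_walk_def path_edges_def by auto

lemma circuit_straight_walk: "straight_walk (\<lambda>k. c ! k) (2 * n)"
proof -
  have "is_path (set c) (path_edges c) c (2 * n)"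
    using circuit length_circuit
    unfolding closed_path_def is_path_def is_walk_def path_edges_def by auto
  then have "straight opp c" using circuit_straight unfolding straight_circuit_def by blast
  then show ?thesis using straight_walk_of_path circuit_walk by blast
qed

lemma circuit_distinct:
  assumes "i < j" and "j < 2 * n"
  shows "c ! i \<noteq> c ! j"
proof
  assume eq: "c ! i = c ! j"
  show False
  proof (cases "j - i = 2 * n - 1")
    case True
    then have "i = 0" "j = 2 * n - 1" using assms by auto
    then have "{c ! j, c ! 0} \<in> E"
      using straight_walkD(2)[OF circuit_straight_walk, of j] circuit_closes two_le_n by simp
    then show False using edgeD(3) eq \<open>i = 0\<close> by metis
  next
    case False
    have "straight_walk (\<lambda>k. c ! (i + k)) (j - i)"
      using straight_walk_shift[OF circuit_straight_walk] assms by simp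
    moreover have "1 \<le> j - i" "j - i \<le> 2 * n - 2" using assms False by auto
    ultimately have "c ! (i + 0) \<noteq> c ! (i + (j - i))" by (rule no_short_straight_loop)
    then show False using eq assms(1) by simp
  qed
qed

lemma circuit_vertex_of_nat: "i \<le> 2 * n \<Longrightarrow> circuit_vertex c (int i) = c ! i"
  unfolding circuit_vertex_def using circuit_closes
  by (cases "i = 2 * n") (simp_all add: nat_mod_distrib)

lemma circuit_vertex_eq_iff:
  "circuit_vertex c z = circuit_vertex c w \<longleftrightarrow> z mod int (2 * n) = w mod int (2 * n)"
proof
  let ?i = "nat (z mod int (2 * n))" and ?j = "nat (w mod int (2 * n))"
  assume "circuit_vertex c z = circuit_vertex c w"
  then have "c ! ?i = c ! ?j" unfolding circuit_vertex_def .
  moreover have "?i < 2 * n" "?j < 2 * n" using nat_mod_period_less by simp_all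
  ultimately have "?i = ?j" using circuit_distinct by (metis linorder_neqE_nat)
  then show "z mod int (2 * n) = w mod int (2 * n)"
    using mod_period_bounds(1) eq_nat_nat_iff by blast
qed (simp add: circuit_vertex_def)

lemma circuit_vertex_in_set: "circuit_vertex c z \<in> set c"
proof -
  have "nat (z mod int (2 * n)) < length c"
    using nat_mod_period_less[of z] length_circuit by simp
  then show ?thesis unfolding circuit_vertex_def by simp
qed

lemma in_circuit_iff: "x \<in> set c \<longleftrightarrow> (\<exists>z. x = circuit_vertex c z)"
  using circuit_vertex_in_set circuit_vertex_of_nat length_circuit
  by (metis in_set_conv_nth less_Suc_eq_le)

lemma circuit_vertex_edge: "{circuit_vertex c z, circuit_vertex c (z + 1)} \<in> path_edges c"
proof -
  define i where "i = nat (z mod int (2 * n))"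
  have i: "i < 2 * n" "int i = z mod int (2 * n)"
    unfolding i_def using nat_mod_period_less mod_period_bounds(1) by simp_all
  have "circuit_vertex c z = c ! i" unfolding circuit_vertex_def i_def ..
  moreover have "circuit_vertex c (z + 1) = c ! Suc i"
  proof -
    have "(z + 1) mod int (2 * n) = int (Suc i) mod int (2 * n)"
      using i(2) by (simp add: mod_add_right_eq add.commute[of z 1])
    then have "circuit_vertex c (z + 1) = circuit_vertex c (int (Suc i))"
      by (simp only: circuit_vertex_eq_iff)
    then show ?thesis using circuit_vertex_of_nat[of "Suc i"] i(1) by simp
  qed
  ultimately show ?thesis using i length_circuit unfolding path_edges_def by auto
qed

lemma circuit_vertex_edge_unit:
  "d = 1 \<or> d = -1 \<Longrightarrow> {circuit_vertex c z, circuit_vertex c (z + d)} \<in> path_edges c"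
  using circuit_vertex_edge[of z] circuit_vertex_edge[of "z - 1"] by (auto simp: insert_commute)

lemma path_edges_circuit_vertex:
  assumes "e \<in> path_edges c"
  shows "\<exists>z. e = {circuit_vertex c z, circuit_vertex c (z + 1)}"
proof -
  obtain i where "e = {c ! i, c ! Suc i}" "i < 2 * n"
    using assms length_circuit unfolding path_edges_def by auto
  then show ?thesis using circuit_vertex_of_nat[of i] circuit_vertex_of_nat[of "Suc i"]
    by (intro exI[of _ "int i"]) (simp add: add.commute[of "int i" 1])
qed

lemma circuit_vertex_adjacent:
  assumes "{circuit_vertex c z, y} \<in> path_edges c"
  shows "y = circuit_vertex c (z + 1) \<or> y = circuit_vertex c (z - 1)"
proof -
  obtain w where "{circuit_vertex c z, y} = {circuit_vertex c w, circuit_vertex c (w + 1)}"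
    using path_edges_circuit_vertex[OF assms] by blast
  then consider "circuit_vertex c z = circuit_vertex c w" "y = circuit_vertex c (w + 1)"
    | "circuit_vertex c z = circuit_vertex c (w + 1)" "y = circuit_vertex c w"
    by (auto simp: doubleton_eq_iff)
  then show ?thesis
  proof cases
    case 1
    then have "z mod int (2 * n) = w mod int (2 * n)" by (simp only: circuit_vertex_eq_iff)
    then have "(z + 1) mod int (2 * n) = (w + 1) mod int (2 * n)" by (metis mod_add_left_eq)
    then have "circuit_vertex c (z + 1) = circuit_vertex c (w + 1)"
      by (simp only: circuit_vertex_eq_iff)
    with 1 show ?thesis by simp
  next
    case 2
    then have "z mod int (2 * n) = (w + 1) mod int (2 * n)" by (simp only: circuit_vertex_eq_iff)
    then have "(z - 1) mod int (2 * n) = w mod int (2 * n)"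
      by (metis mod_diff_left_eq add_diff_cancel_right')
    then have "circuit_vertex c (z - 1) = circuit_vertex c w" by (simp only: circuit_vertex_eq_iff)
    with 2 show ?thesis by simp
  qed
qed

lemma circuit_vertex_opp:
  assumes d: "d = 1 \<or> d = -1"
  shows "opp (circuit_vertex c (z + d)) (circuit_vertex c z) (circuit_vertex c (z + 2 * d))"
proof -
  define L where "L = [circuit_vertex c z, circuit_vertex c (z + d), circuit_vertex c (z + 2 * d)]"
  have "{circuit_vertex c (z + d), circuit_vertex c (z + 2 * d)} \<in> path_edges c"
    using circuit_vertex_edge_unit[OF d, of "z + d"] by (simp add: algebra_simps)
  moreover have "circuit_vertex c z \<noteq> circuit_vertex c (z + 2 * d)"
    using mod_neq_add_twice_unit[OF four_le_period d] by (simp add: circuit_vertex_eq_iff)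
  ultimately have "is_path (set c) (path_edges c) L 2"
    using circuit_vertex_edge_unit[OF d, of z] circuit_vertex_in_set
    unfolding L_def is_path_def is_walk_def by (auto simp: less_Suc_eq numeral_2_eq_2 le_Suc_eq)
  then have "straight opp L" using circuit_straight unfolding straight_circuit_def by blast
  then show ?thesis unfolding straight_def L_def by (auto dest!: spec[where x=1])
qed

lemma straight_walk_along_circuit:
  assumes g: "straight_walk g m" and "1 \<le> m"
    and edges: "\<And>j. j < m \<Longrightarrow> {g j, g (Suc j)} \<in> path_edges c"
  shows "\<exists>z0 d. (d = 1 \<or> d = -1) \<and> (\<forall>j\<le>m. g j = circuit_vertex c (z0 + d * int j))"
proof -
  have "g 0 \<in> set c" using edges[of 0] \<open>1 \<le> m\<close> path_edges_subset_set by fastforce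
  then obtain z0 where z0: "g 0 = circuit_vertex c z0" using in_circuit_iff by blast
  then have "g 1 = circuit_vertex c (z0 + 1) \<or> g 1 = circuit_vertex c (z0 - 1)"
    using circuit_vertex_adjacent edges[of 0] \<open>1 \<le> m\<close> by simp
  then obtain d :: int where d: "d = 1 \<or> d = -1" "g 1 = circuit_vertex c (z0 + d)"
  proof
    assume "g 1 = circuit_vertex c (z0 + 1)"
    then show ?thesis using that[of 1] by simp
  next
    assume "g 1 = circuit_vertex c (z0 - 1)"
    then show ?thesis using that[of "-1"] by simp
  qed
  have "g j = circuit_vertex c (z0 + d * int j) \<and>
      g (Suc j) = circuit_vertex c (z0 + d * int (Suc j))" if "Suc j \<le> m" for j
    using that
  proof (induction j)
    case 0
    then show ?case using z0 d by simp
  next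
    case (Suc j)
    define z where "z = z0 + d * int (Suc j)"
    have prev: "g j = circuit_vertex c (z - d)" and cur: "g (Suc j) = circuit_vertex c z"
      using Suc unfolding z_def by (simp_all add: algebra_simps)
    have next_choices:
      "g (Suc (Suc j)) = circuit_vertex c (z + 1) \<or> g (Suc (Suc j)) = circuit_vertex c (z - 1)"
      using circuit_vertex_adjacent edges[of "Suc j"] cur Suc.prems by simp
    have no_return: "g j \<noteq> g (Suc (Suc j))" using straight_walk_no_backtrack[OF g] Suc.prems by simp
    from d(1) have "g (Suc (Suc j)) = circuit_vertex c (z + d)"
    proof
      assume "d = 1"
      then show ?thesis using next_choices no_return prev by auto
    next
      assume "d = -1"
      then show ?thesis using next_choices no_return prev by auto
    qed
    then show ?case using cur unfolding z_def by (simp add: algebra_simps)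
  qed
  then have "g j = circuit_vertex c (z0 + d * int j)" if "j \<le> m" for j
    using z0 that by (cases j) simp_all
  then have "\<forall>j\<le>m. g j = circuit_vertex c (z0 + d * int j)" by blast
  with d(1) show ?thesis by blast
qed

lemma apartment_circuit_vertex:
  assumes d: "d = 1 \<or> d = -1"
  shows "apartment (\<lambda>k. circuit_vertex c (z0 + d * int k))"
proof -
  let ?h = "\<lambda>k. circuit_vertex c (z0 + d * int k)"
  have shift: "?h (Suc k) = circuit_vertex c (z0 + d * int k + d)"
    "?h (Suc (Suc k)) = circuit_vertex c (z0 + d * int k + 2 * d)" for k
    by (simp_all add: algebra_simps)
  have "set c \<subseteq> V" using circuit_walk unfolding is_walk_def by simp
  then have "?h k \<in> V" for k using circuit_vertex_in_set by blast
  moreover have "{?h k, ?h (Suc k)} \<in> E" for k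
  proof -
    have "{?h k, ?h (Suc k)} \<in> path_edges c"
      unfolding shift(1) by (rule circuit_vertex_edge_unit[OF d])
    then show ?thesis using path_edges_circuit by blast
  qed
  moreover have "opp (?h (Suc k)) (?h k) (?h (Suc (Suc k)))" for k
    unfolding shift(2) by (subst shift(1)) (rule circuit_vertex_opp[OF d])
  moreover have "?h (k + 2 * n) = ?h k" for k
  proof -
    have "z0 + d * int (k + 2 * n) = z0 + d * int k + d * int (2 * n)" by (simp add: algebra_simps)
    then show ?thesis by (simp only: circuit_vertex_eq_iff mod_mult_self1)
  qed
  ultimately show ?thesis unfolding apartment_def straight_walk_def by blast
qed

end

lemma straight_walk_extends_to_apartment:
  assumes g: "straight_walk g (Suc n)"
  shows "\<exists>h. apartment h \<and> (\<forall>j\<le>Suc n. h j = g j)"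
proof -
  let ?p = "map g [0..<Suc (Suc n)]"
  have "is_path V E ?p (n + 1)" and "straight opp ?p" using straight_walk_is_path[OF g] by simp_all
  then obtain c where c: "closed_path V E c (2 * n)" "straight_circuit opp c"
      and edges: "path_edges ?p \<subseteq> path_edges c"
    using straight_path_in_circuit by blast
  have g_edges: "{g j, g (Suc j)} \<in> path_edges c" if "j < Suc n" for j
  proof -
    have "{?p ! j, ?p ! Suc j} \<in> path_edges ?p"
      using that unfolding path_edges_def by (auto simp del: upt_Suc intro!: exI[of _ j])
    moreover have "?p ! j = g j" "?p ! Suc j = g (Suc j)" using that by (simp_all del: upt_Suc)
    ultimately show ?thesis using edges by (metis subsetD)
  qed
  obtain z0 d where d: "d = 1 \<or> d = -1"
    and g_eq: "\<forall>j\<le>Suc n. g j = circuit_vertex c (z0 + d * int j)"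
    using straight_walk_along_circuit[OF c g _ g_edges] by auto
  show ?thesis
    using apartment_circuit_vertex[OF c d] g_eq
    by (intro exI[of _ "\<lambda>k. circuit_vertex c (z0 + d * int k)"]) simp
qed

lemma straight_walk_extend:
  assumes g: "straight_walk g k" and "1 \<le> k"
  shows "\<exists>P. straight_walk P (k + d) \<and> (\<forall>i\<le>k. P i = g i)"
proof (induction d)
  case 0
  show ?case using g by (intro exI[of _ g]) simp
next
  case (Suc d)
  define m where "m = k + d"
  obtain P where P: "straight_walk P m" "\<forall>i\<le>k. P i = g i" using Suc.IH unfolding m_def by blast
  have PV: "P m \<in> V" using straight_walkD(1)[OF P(1)] by simp
  have "m - 1 < m" "Suc (m - 1) = m" using \<open>1 \<le> k\<close> unfolding m_def by auto
  then have prev: "P (m - 1) \<in> nbrs E (P m)"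
    using straight_walkD(2)[OF P(1), of "m - 1"] by (simp add: mem_nbrs_iff)
  obtain w where w: "w \<in> nbrs E (P m)" "opp (P m) w (P (m - 1))"
    using exists_common_opp[OF PV prev prev] by blast
  have "straight_walk (\<lambda>i. if i \<le> m then P i else w) (Suc m)"
  proof (rule straight_walk_snoc[OF P(1)])
    show "{P m, w} \<in> E" using w(1) by (simp add: mem_nbrs_iff insert_commute)
    show "opp (P m) (P (m - 1)) w" using opp_sym[OF PV w(2)] .
  qed
  moreover have "\<forall>i\<le>k. (if i \<le> m then P i else w) = g i" using P(2) unfolding m_def by simp
  ultimately show ?case unfolding m_def by (intro exI[of _ "\<lambda>i. if i \<le> k + d then P i else w"]) simp
qed

text \<open>Extend Q by x to an apartment and read it backwards from position 2n.\<close>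

lemma straight_walk_reroute:
  assumes Q: "straight_walk Q n" and x: "x \<in> nbrs E (Q n)" and o: "opp (Q n) x (Q (n - 1))"
  shows "\<exists>Q'. straight_walk Q' n \<and> Q' 0 = Q 0 \<and> Q' n = Q n \<and> Q' (n - 1) = x"
proof -
  have "Q n \<in> V" using straight_walkD(1)[OF Q] by simp
  have ext: "straight_walk (\<lambda>k. if k \<le> n then Q k else x) (Suc n)"
  proof (rule straight_walk_snoc[OF Q])
    show "{Q n, x} \<in> E" using x by (simp add: mem_nbrs_iff insert_commute)
    show "opp (Q n) (Q (n - 1)) x" using opp_sym[OF \<open>Q n \<in> V\<close> o] .
  qed
  obtain h where h: "apartment h" "\<forall>j\<le>Suc n. h j = (if j \<le> n then Q j else x)"
    using straight_walk_extends_to_apartment[OF ext] by blast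
  have "h 0 = Q 0" "h n = Q n" "h (Suc n) = x" using h(2) by simp_all
  moreover have "h (n + (n - 0)) = h 0"
    using apartment_periodic[OF h(1), of 0] by (simp add: mult_2)
  moreover have "n + (n - (n - 1)) = Suc n" using two_le_n by simp
  moreover have "straight_walk (\<lambda>k. h (n + (n - k))) n"
    using straight_walk_rev[OF apartment_straight_walk[OF h(1), of n n]] by simp
  ultimately show ?thesis by (intro exI[of _ "\<lambda>k. h (n + (n - k))"]) simp
qed

lemma straight_walk_any_penultimate:
  assumes P: "straight_walk P n" and z: "z \<in> nbrs E (P n)"
  shows "\<exists>Q. straight_walk Q n \<and> Q 0 = P 0 \<and> Q n = P n \<and> Q (n - 1) = z"
proof -
  have PV: "P n \<in> V" using straight_walkD(1)[OF P] by simp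
  have "n - 1 < n" "Suc (n - 1) = n" using two_le_n by auto
  then have "P (n - 1) \<in> nbrs E (P n)"
    using straight_walkD(2)[OF P, of "n - 1"] by (simp add: mem_nbrs_iff)
  then obtain w where w: "w \<in> nbrs E (P n)" "opp (P n) w z" "opp (P n) w (P (n - 1))"
    using exists_common_opp[OF PV z] by blast
  obtain Q1 where Q1: "straight_walk Q1 n" "Q1 0 = P 0" "Q1 n = P n" "Q1 (n - 1) = w"
    using straight_walk_reroute[OF P w(1,3)] by blast
  have "opp (Q1 n) z (Q1 (n - 1))" using Q1(3,4) w(2) opp_sym[OF PV] by simp
  then show ?thesis using straight_walk_reroute[OF Q1(1)] z Q1(2,3) by auto
qed

text \<open>
  The straight path A n, ..., A 0, B 1 extends to an apartment; by (VP2) the apartment returns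
  from B 1 to A n along B, so it passes through B (n-1), A n, A (n-1) consecutively.
\<close>

lemma apartment_opp_penultimates:
  assumes A: "straight_walk A n" and B: "straight_walk B n"
    and start: "A 0 = B 0" and finish: "A n = B n" and o: "opp (A 0) (B 1) (A 1)"
  shows "opp (A n) (A (n - 1)) (B (n - 1))"
proof -
  have A0: "A 0 \<in> V" and An: "A n \<in> V" using straight_walkD(1)[OF A] by simp_all
  have ext: "straight_walk (\<lambda>k. if k \<le> n then A (n - k) else B 1) (Suc n)"
    using straight_walk_snoc[OF straight_walk_rev[OF A]] straight_walkD(2)[OF B, of 0] two_le_n
      start opp_sym[OF A0 o] by simp
  obtain h where h: "apartment h" "\<forall>j\<le>Suc n. h j = (if j \<le> n then A (n - j) else B 1)"
    using straight_walk_extends_to_apartment[OF ext] by blast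
  have idx: "Suc n + (n - 1) = 2 * n" "Suc n + (n - 2) = 2 * n - 1" "1 + (n - 2) = n - 1"
    "Suc (2 * n - 1) = 2 * n"
    using two_le_n by auto
  have wrap: "h (2 * n) = A n" "h (Suc (2 * n)) = A (n - 1)"
    using apartment_periodic[OF h(1), of 0] apartment_periodic[OF h(1), of 1] h(2) two_le_n
    by simp_all
  have "straight_walk (\<lambda>i. h (Suc n + i)) (n - 1)" using apartment_straight_walk[OF h(1)] .
  moreover have "straight_walk (\<lambda>i. B (1 + i)) (n - 1)"
    using straight_walk_shift[OF B, of 1 "n - 1"] two_le_n by simp
  moreover have "h (Suc n + 0) = B (1 + 0)" "h (Suc n + (n - 1)) = B (1 + (n - 1))"
    using h(2) wrap(1) finish two_le_n unfolding idx(1) by simp_all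
  ultimately have "h (Suc n + (n - 2)) = B (1 + (n - 2))"
    using straight_walk_unique(2)[of "n - 1" "\<lambda>i. B (1 + i)" "\<lambda>i. h (Suc n + i)" "n - 1" "n - 2"]
      two_le_n by simp
  then have "h (2 * n - 1) = B (n - 1)" unfolding idx .
  moreover have "opp (h (Suc (2 * n - 1))) (h (2 * n - 1)) (h (Suc (Suc (2 * n - 1))))"
    using straight_walkD(3)[OF apartment_straight_walk[OF h(1), of "2 * n - 1" 2], of 0] by simp
  ultimately have "opp (A n) (B (n - 1)) (A (n - 1))" unfolding idx wrap by simp
  then show ?thesis using opp_sym[OF An] by blast
qed

section \<open>Propagation of trivial opposition\<close>

definition trivial_at :: "'a \<Rightarrow> bool" where
  "trivial_at v \<longleftrightarrow> trivial_opp (nbrs E v) (opp v)"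

lemma trivial_at_straight_walk_end:
  assumes P: "straight_walk P n" and triv: "trivial_at (P 0)"
  shows "trivial_at (P n)"
  unfolding trivial_at_def trivial_opp_def
proof (intro ballI impI)
  fix x y assume x: "x \<in> nbrs E (P n)" and y: "y \<in> nbrs E (P n)" and "x \<noteq> y"
  obtain A where A: "straight_walk A n" "A 0 = P 0" "A n = P n" "A (n - 1) = x"
    using straight_walk_any_penultimate[OF P x] by blast
  obtain B where B: "straight_walk B n" "B 0 = P 0" "B n = P n" "B (n - 1) = y"
    using straight_walk_any_penultimate[OF P y] by blast
  have "A 1 \<noteq> B 1"
  proof
    assume "A 1 = B 1"
    have "straight_walk (\<lambda>i. A (1 + i)) (n - 1)" "straight_walk (\<lambda>i. B (1 + i)) (n - 1)"
      using straight_walk_shift[OF A(1), of 1 "n - 1"] straight_walk_shift[OF B(1), of 1 "n - 1"]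
        two_le_n by simp_all
    moreover have "1 + (n - 1) = n" "1 + (n - 2) = n - 1" using two_le_n by simp_all
    ultimately have "B (1 + (n - 2)) = A (1 + (n - 2))"
      using straight_walk_unique(2)[of "n - 1" "\<lambda>i. A (1 + i)" "\<lambda>i. B (1 + i)" "n - 1" "n - 2"]
        \<open>A 1 = B 1\<close> A(3) B(3) two_le_n by simp
    then show False using A(4) B(4) \<open>x \<noteq> y\<close> \<open>1 + (n - 2) = n - 1\<close> by simp
  qed
  moreover have "A 1 \<in> nbrs E (P 0)" "B 1 \<in> nbrs E (P 0)"
    using straight_walkD(2)[OF A(1), of 0] straight_walkD(2)[OF B(1), of 0] A(2) B(2) two_le_n
    by (simp_all add: mem_nbrs_iff insert_commute)
  ultimately have "opp (A 0) (B 1) (A 1)"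
    using triv A(2) unfolding trivial_at_def trivial_opp_def by auto
  then have "opp (A n) (A (n - 1)) (B (n - 1))"
    using apartment_opp_penultimates[OF A(1) B(1)] A(2,3) B(2,3) by simp
  then show "opp (P n) x y" using A(3,4) B(4) by simp
qed

lemma trivial_at_two_steps:
  assumes triv: "trivial_at a" and am: "{a, m} \<in> E" and mc: "{m, c} \<in> E"
  shows "trivial_at c"
proof -
  have mV: "m \<in> V" using edgeD(2)[OF am] .
  have "a \<in> nbrs E m" "c \<in> nbrs E m" using am mc by (simp_all add: mem_nbrs_iff insert_commute)
  then obtain e where e: "e \<in> nbrs E m" "opp m e a" "opp m e c"
    using exists_common_opp[OF mV] by blast
  have "e \<in> V" using e(1) edgeD(1) by (simp add: mem_nbrs_iff)
  have ame: "straight_walk (\<lambda>k. [a, m, e] ! k) 2"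
    using am e(1) opp_sym[OF mV e(2)] edgeD[OF am] \<open>e \<in> V\<close>
    unfolding straight_walk_def
    by (auto simp: mem_nbrs_iff insert_commute numeral_2_eq_2 less_Suc_eq le_Suc_eq)
  obtain P where P: "straight_walk P (2 + (n - 2))" "\<forall>i\<le>2. P i = [a, m, e] ! i"
    using straight_walk_extend[OF ame, of "n - 2"] by auto
  have "2 + (n - 2) = n" using two_le_n by simp
  then have Pn: "straight_walk P n" using P(1) by simp
  have P012: "P 0 = a" "P 1 = m" "P 2 = e"
    using P(2) by (auto dest: spec[of _ 0] spec[of _ 1] spec[of _ 2])
  have "trivial_at (P n)" using trivial_at_straight_walk_end[OF Pn] triv P012 by simp
  moreover have "straight_walk (P(0 := c)) n"
    using straight_walk_update_start[OF Pn] mc opp_sym[OF mV e(3)] P012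
    by (simp add: insert_commute)
  then have "straight_walk (\<lambda>k. (P(0 := c)) (n - k)) n" by (rule straight_walk_rev)
  ultimately have "trivial_at ((P(0 := c)) (n - n))"
    using trivial_at_straight_walk_end two_le_n by fastforce
  then show ?thesis by simp
qed

lemma trivial_at_walk_parity:
  assumes walk: "is_walk V E xs L" and "i \<le> L" and "j \<le> L" and "even i = even j"
    and triv: "trivial_at (xs ! i)"
  shows "trivial_at (xs ! j)"
proof -
  have edge: "{xs ! k, xs ! Suc k} \<in> E" if "k < L" for k
    using walk that unfolding is_walk_def by blast
  have step: "trivial_at (xs ! k) \<longleftrightarrow> trivial_at (xs ! (k + 2))" if "k + 2 \<le> L" for k
  proof -
    have "{xs ! k, xs ! Suc k} \<in> E" "{xs ! Suc k, xs ! (k + 2)} \<in> E"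
      using edge[of k] edge[of "Suc k"] that by simp_all
    then show ?thesis
      using trivial_at_two_steps[of "xs ! k" "xs ! Suc k" "xs ! (k + 2)"]
        trivial_at_two_steps[of "xs ! (k + 2)" "xs ! Suc k" "xs ! k"] by (auto simp: insert_commute)
  qed
  have far: "trivial_at (xs ! k) \<longleftrightarrow> trivial_at (xs ! (k + 2 * d))" if "k + 2 * d \<le> L" for k d
    using that
  proof (induction d)
    case (Suc d)
    then show ?case using step[of "k + 2 * d"] by simp
  qed simp
  show ?thesis
  proof (cases "i \<le> j")
    case True
    then have "j = i + 2 * ((j - i) div 2)" using \<open>even i = even j\<close> by presburger
    then show ?thesis using far[of i "(j - i) div 2"] triv \<open>j \<le> L\<close> by simp
  next
    case False
    then have "i = j + 2 * ((i - j) div 2)" using \<open>even i = even j\<close> by presburger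
    then show ?thesis using far[of j "(i - j) div 2"] triv \<open>i \<le> L\<close> by simp
  qed
qed

lemma trivial_at_neighbour_if_odd:
  assumes "odd n" and triv: "trivial_at v" and vu: "{v, u} \<in> E"
  shows "trivial_at u"
proof -
  have vu_walk: "straight_walk (\<lambda>k. [v, u] ! k) 1"
    using vu edgeD[OF vu] unfolding straight_walk_def by (auto simp: le_Suc_eq)
  obtain P where P: "straight_walk P (1 + (n - 1))" "\<forall>i\<le>1. P i = [v, u] ! i"
    using straight_walk_extend[OF vu_walk, of "n - 1"] by auto
  have "1 + (n - 1) = n" using two_le_n by simp
  then have Pn: "straight_walk P n" using P(1) by simp
  have "P 0 = v" "P 1 = u" using P(2) by auto
  then have "trivial_at (P n)" using trivial_at_straight_walk_end[OF Pn] triv by simp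
  moreover have "is_walk V E (map P [0..<Suc n]) n"
    using straight_walk_is_path(1)[OF Pn] unfolding is_path_def by simp
  ultimately have "trivial_at (map P [0..<Suc n] ! 1)"
    using trivial_at_walk_parity[of "map P [0..<Suc n]" n n 1] \<open>odd n\<close> two_le_n
    by (simp del: upt_Suc)
  then show ?thesis using \<open>P 1 = u\<close> two_le_n by (simp del: upt_Suc)
qed

lemma gdist_walk_nth:
  assumes "v \<in> V" and "w \<in> V"
  shows "\<exists>xs. is_walk V E xs (gdist V E v w) \<and> xs ! 0 = v \<and> xs ! gdist V E v w = w"
proof -
  have "connected_graph V E" using ngon unfolding veldkamp_ngon_def by simp
  then show ?thesis using gdist_walk[of V E v w] assms is_walk_hd_last by metis
qed

lemma trivial_at_even_gdist:
  assumes "v \<in> V" and "w \<in> V" and "even (gdist V E v w)" and "trivial_at v"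
  shows "trivial_at w"
proof -
  obtain xs where xs: "is_walk V E xs (gdist V E v w)" "xs ! 0 = v" "xs ! gdist V E v w = w"
    using gdist_walk_nth[OF assms(1,2)] by blast
  then show ?thesis using trivial_at_walk_parity[OF xs(1), of 0 "gdist V E v w"] assms(3,4) by simp
qed

lemma trivial_at_everywhere_if_odd:
  assumes "odd n" and "v \<in> V" and "w \<in> V" and triv: "trivial_at v"
  shows "trivial_at w"
proof (cases "even (gdist V E v w)")
  case False
  obtain xs where xs: "is_walk V E xs (gdist V E v w)" "xs ! 0 = v" "xs ! gdist V E v w = w"
    using gdist_walk_nth[OF assms(2,3)] by blast
  have "0 < gdist V E v w" using False by (rule odd_pos)
  then have "{xs ! 0, xs ! Suc 0} \<in> E" using xs(1) unfolding is_walk_def by blast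
  then have "trivial_at (xs ! 1)" using trivial_at_neighbour_if_odd[OF assms(1) triv] xs(2) by simp
  then show ?thesis
    using trivial_at_walk_parity[OF xs(1), of 1 "gdist V E v w"] False \<open>0 < gdist V E v w\<close> xs(3)
    by simp
qed (use trivial_at_even_gdist assms in blast)

end

theorem proposition2p17:
  fixes V :: "'a set" and E :: "'a set set" and opp :: "'a \<Rightarrow> 'a \<Rightarrow> 'a \<Rightarrow> bool"
    and n :: nat and v :: 'a
  assumes "veldkamp_ngon V E opp n"
    and "v \<in> V"
    and "trivial_opp (nbrs E v) (opp v)"
  shows "(\<forall>w\<in>V. even (gdist V E v w) \<longrightarrow> trivial_opp (nbrs E w) (opp w))
       \<and> (odd n \<longrightarrow> (\<forall>w\<in>V. trivial_opp (nbrs E w) (opp w)))"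
proof -
  interpret veldkamp_polygon V E opp n by unfold_locales (rule assms(1))
  have "trivial_at v" using assms(3) unfolding trivial_at_def .
  then show ?thesis
    using trivial_at_even_gdist trivial_at_everywhere_if_odd assms(2)
    unfolding trivial_at_def by blast
qed

end
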